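(* Let $n\ge 10^4$ be a multiple of $3$, let $\alpha(n)=e^{120(\log n)^{1/2}}$, $L=n^{1/2}$ and $K=n^{1/2}/12$, and fix integers $i,j\in[-(\log n)^{1/2}/2,(\log n)^{1/2}/2]$. For $D\subset[n]$ let $r_D=|D\cap[n/3]|-n/6$ and $s_D=|D\cap[n/3+1,n]|-n/3$, and let \[ [n]_{i,j}=\{D\subset[n]: |r_D-2iL|\le L\text{ and }|s_D-2jL|\le L\}. \] Choose independently: a uniformly random set $U\subset[n/3]$ of size $K$; a random set $S_1\subset[n/3]\setminus U$ containing each element independently with probability $p_{1,i}=1/2+6i/n^{1/2}$; a uniformly random set $V\subset[n/3+1,n]$ of size $2K$; a random set $S_2\subset[n/3+1,n]\setminus V$ containing each element independently with probability $p_{2,j}=1/2+3j/n^{1/2}$; a uniformly random ordering $(u_1,\ldots,u_K)$ of $U$ and a uniformly random ordering $(v_1,\ldots,v_{2K})$ of $V$. For $k\in[0,K]$ let $U_k=\{u_1,\ldots,u_k\}$, $V_k=\{v_{2K-2k+1},\ldots,v_{2K}\}$ and $C_k=U_k\cup S_1\cup V_k\cup S_2$. Then for every $B\in[n]_{i,j}$ and every $k\in[0,K]$, \[ \mathbb{P}(C_k=B)\ge\frac{1}{8\,\alpha(n)\,|[n]_{i,j}|}. \]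
   Context: $[n]=\{1,\ldots,n\}$ and $[a,b]=\{a,\ldots,b\}$; $\log$ is the natural logarithm. Floors and ceilings are omitted where not crucial (quantities such as $K$, $L$, $n/6$ are treated as integers). *)

theory Defs
  imports "HOL-Probability.Probability" "HOL-Combinatorics.Multiset_Permutations"
begin

definition alpha :: "nat \<Rightarrow> real" where
  "alpha n = exp (120 * sqrt (ln (real n)))"

definition Lpar :: "nat \<Rightarrow> real" where
  "Lpar n = sqrt (real n)"

definition Kpar :: "nat \<Rightarrow> nat" where
  "Kpar n = nat \<lfloor>sqrt (real n) / 12\<rfloor>"

definition rD :: "nat \<Rightarrow> nat set \<Rightarrow> real" where
  "rD n D = real (card (D \<inter> {1..n div 3})) - real n / 6"

definition sD :: "nat \<Rightarrow> nat set \<Rightarrow> real" where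
  "sD n D = real (card (D \<inter> {n div 3 + 1..n})) - real n / 3"

definition box :: "nat \<Rightarrow> int \<Rightarrow> int \<Rightarrow> nat set set" where
  "box n i j = {D. D \<subseteq> {1..n} \<and>
      \<bar>rD n D - 2 * real_of_int i * Lpar n\<bar> \<le> Lpar n \<and>
      \<bar>sD n D - 2 * real_of_int j * Lpar n\<bar> \<le> Lpar n}"

definition random_subset :: "'a set \<Rightarrow> real \<Rightarrow> 'a set pmf" where
  "random_subset A p = map_pmf (\<lambda>f. {x \<in> A. f x}) (Pi_pmf A False (\<lambda>_. bernoulli_pmf p))"

definition p1 :: "nat \<Rightarrow> int \<Rightarrow> real" where
  "p1 n i = 1/2 + 6 * real_of_int i / sqrt (real n)"

definition p2 :: "nat \<Rightarrow> int \<Rightarrow> real" where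
  "p2 n j = 1/2 + 3 * real_of_int j / sqrt (real n)"

definition C_pmf :: "nat \<Rightarrow> int \<Rightarrow> int \<Rightarrow> nat \<Rightarrow> nat set pmf" where
  "C_pmf n i j k =
    do {
      U \<leftarrow> pmf_of_set {U. U \<subseteq> {1..n div 3} \<and> card U = Kpar n};
      S1 \<leftarrow> random_subset ({1..n div 3} - U) (p1 n i);
      V \<leftarrow> pmf_of_set {V. V \<subseteq> {n div 3 + 1..n} \<and> card V = 2 * Kpar n};
      S2 \<leftarrow> random_subset ({n div 3 + 1..n} - V) (p2 n j);
      us \<leftarrow> pmf_of_set (permutations_of_set U);
      vs \<leftarrow> pmf_of_set (permutations_of_set V);
      return_pmf (set (take k us) \<union> S1 \<union> set (drop (2 * Kpar n - 2 * k) vs) \<union> S2)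
    }"

end

theory Submission
  imports Defs
begin

text \<open>Conditioning on the events that U meets B in exactly k points, that these come first
  in the ordering of U, and that S_1 = (B \<inter> [n/3]) - U (and symmetrically for V and S_2)
  bounds P(C_k = B) below by a product of two explicit weights. Comparing binomial
  coefficients with powers, each weight is at least exp(-O(sqrt (log n))) times the point
  mass p^b (1 - p)^(m - b) of the corresponding part of B under independent p-coins. By
  Hoeffding's inequality the sizes allowed in [n]_{i,j} carry at least half of the binomial
  mass, and all point masses in this window agree up to a factor exp(O(sqrt (log n))); so each
  point mass is at least exp(-O(sqrt (log n))) divided by the number of subsets in its window,
  and the two windows together form at most |[n]_{i,j}| sets.\<close>

section \<open>Lower bounds for the sampling procedure\<close>

lemma pmf_bind_ge: "pmf M y * pmf (f y) x \<le> pmf (M \<bind> f) x"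
proof -
  have "ennreal (pmf M y * pmf (f y) x) = (\<integral>\<^sup>+z. ennreal (pmf (f z) x) * indicator {y} z \<partial>measure_pmf M)"
    by (simp add: nn_integral_cmult_indicator ennreal_mult' emeasure_pmf_single mult.commute)
  also have "\<dots> \<le> (\<integral>\<^sup>+z. ennreal (pmf (f z) x) \<partial>measure_pmf M)"
    by (intro nn_integral_mono) (auto simp: indicator_def)
  also have "\<dots> = ennreal (pmf (M \<bind> f) x)"
    by (simp add: ennreal_pmf_bind)
  finally show ?thesis
    by simp
qed

lemma pmf_bind_pmf_of_set_ge:
  assumes "finite S" "G \<subseteq> S" "\<And>y. y \<in> G \<Longrightarrow> c \<le> pmf (f y) x" "0 \<le> c"
  shows "real (card G) * c / real (card S) \<le> pmf (pmf_of_set S \<bind> f) x"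
proof (cases "S = {}")
  case False
  have "real (card G) * c \<le> (\<Sum>y\<in>G. pmf (f y) x)"
    using assms(3) by (simp add: sum_bounded_below)
  also have "\<dots> \<le> (\<Sum>y\<in>S. pmf (f y) x)"
    using assms by (intro sum_mono2) auto
  finally show ?thesis
    using assms False by (simp add: pmf_bind_pmf_of_set divide_right_mono)
qed simp

lemma pmf_bind_pmf_of_set_bind_ge:
  assumes "finite S" "G \<subseteq> S" "\<And>y. y \<in> G \<Longrightarrow> c \<le> pmf (M y) (g y)"
    "\<And>y. y \<in> G \<Longrightarrow> d \<le> pmf (f y (g y)) x" "0 \<le> c" "0 \<le> d"
  shows "real (card G) * (c * d) / real (card S) \<le> pmf (pmf_of_set S \<bind> (\<lambda>y. M y \<bind> f y)) x"
proof (rule pmf_bind_pmf_of_set_ge)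
  fix y assume "y \<in> G"
  then have "c * d \<le> pmf (M y) (g y) * pmf (f y (g y)) x"
    using assms by (intro mult_mono) auto
  also have "\<dots> \<le> pmf (M y \<bind> f y) x"
    by (rule pmf_bind_ge)
  finally show "c * d \<le> pmf (M y \<bind> f y) x" .
qed (use assms in auto)

lemma pmf_random_subset_ge:
  assumes "finite A" "T \<subseteq> A" "0 \<le> p" "p \<le> 1"
  shows "p ^ card T * (1 - p) ^ card (A - T) \<le> pmf (random_subset A p) T"
proof -
  let ?P = "Pi_pmf A False (\<lambda>_. bernoulli_pmf p)"
  have "pmf ?P (\<lambda>x. x \<in> T) = (\<Prod>x\<in>A. pmf (bernoulli_pmf p) (x \<in> T))"
    using assms by (intro pmf_Pi') auto
  also have "\<dots> = (\<Prod>x\<in>T. pmf (bernoulli_pmf p) (x \<in> T)) * (\<Prod>x\<in>A - T. pmf (bernoulli_pmf p) (x \<in> T))"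
    using assms by (metis Diff_partition finite_Diff finite_subset prod.union_disjoint Diff_disjoint)
  also have "\<dots> = p ^ card T * (1 - p) ^ card (A - T)"
    using assms by simp
  finally have eq: "pmf ?P (\<lambda>x. x \<in> T) = p ^ card T * (1 - p) ^ card (A - T)" .
  have "pmf ?P (\<lambda>x. x \<in> T) \<le> measure ?P ((\<lambda>f. {x \<in> A. f x}) -` {T})"
    unfolding measure_pmf_single[symmetric] using assms
    by (intro measure_pmf.finite_measure_mono) auto
  also have "\<dots> = pmf (random_subset A p) T"
    by (simp add: random_subset_def pmf_map)
  finally show ?thesis
    using eq by simp
qed

lemma pmf_random_subset_diff_ge:
  assumes "finite A" "T \<subseteq> A" "U \<subseteq> A" "card U = c" "card (U \<inter> T) = k" "0 \<le> p" "p \<le> 1"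
  shows "p ^ (card T - k) * (1 - p) ^ (card (A - T) - (c - k)) \<le> pmf (random_subset (A - U) p) (T - U)"
proof -
  have finU: "finite U"
    using assms finite_subset by blast
  have "card (T - U) = card T - k"
    using assms finite_subset[OF assms(2)] by (simp add: card_Diff_subset_Int Int_commute)
  moreover have "card ((A - U) - (T - U)) = card (A - T) - (c - k)"
  proof -
    have "(A - U) - (T - U) = (A - T) - (U - T)" and "U - T \<subseteq> A - T"
      using assms by auto
    moreover have "card (U - T) = c - k"
      using assms finU by (simp add: card_Diff_subset_Int)
    ultimately show ?thesis
      using assms by (simp add: card_Diff_subset finite_subset)
  qed
  ultimately show ?thesis
    using pmf_random_subset_ge[of "A - U" "T - U" p] assms by auto
qed

lemma set_drop_eq_Diff_set_take:
  assumes "distinct xs"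
  shows "set (drop m xs) = set xs - set (take m xs)"
proof -
  have "set xs = set (take m xs) \<union> set (drop m xs)"
    by (metis append_take_drop_id set_append)
  then show ?thesis
    using set_take_disj_set_drop_if_distinct[OF assms, of m m] by auto
qed

lemma card_permutations_of_set_take_ge:
  assumes "finite X" "finite Y" "X \<inter> Y = {}"
  shows "fact (card X) * fact (card Y) \<le> card {zs \<in> permutations_of_set (X \<union> Y). set (take (card X) zs) = X}"
proof -
  let ?app = "\<lambda>(xs, ys). xs @ ys"
  let ?G = "{zs \<in> permutations_of_set (X \<union> Y). set (take (card X) zs) = X}"
  have sub: "?app ` (permutations_of_set X \<times> permutations_of_set Y) \<subseteq> ?G"
    using assms by (auto simp: permutations_of_set_def distinct_card[symmetric])
  have inj: "inj_on ?app (permutations_of_set X \<times> permutations_of_set Y)"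
    by (auto simp: inj_on_def permutations_of_set_def distinct_card[symmetric])
  have "fact (card X) * fact (card Y) = card (?app ` (permutations_of_set X \<times> permutations_of_set Y))"
    using assms by (simp add: card_image[OF inj] card_cartesian_product)
  also have "\<dots> \<le> card ?G"
    using assms by (intro card_mono[OF _ sub]) auto
  finally show ?thesis .
qed

lemma card_subsets_Int_ge:
  assumes "finite A" "T \<subseteq> A" "k \<le> c"
  shows "(card T choose k) * (card (A - T) choose (c - k)) \<le> card {U. U \<subseteq> A \<and> card U = c \<and> card (U \<inter> T) = k}"
proof -
  let ?P = "{W. W \<subseteq> T \<and> card W = k} \<times> {W'. W' \<subseteq> A - T \<and> card W' = c - k}"
  let ?union = "\<lambda>(W, W'). W \<union> W'"
  have finT: "finite T"
    using assms finite_subset by blast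
  have sub: "?union ` ?P \<subseteq> {U. U \<subseteq> A \<and> card U = c \<and> card (U \<inter> T) = k}"
  proof
    fix U assume "U \<in> ?union ` ?P"
    then obtain W W' where W: "W \<subseteq> T" "W' \<subseteq> A - T" "card W = k" "card W' = c - k" "U = W \<union> W'"
      by auto
    then have "finite W" "finite W'"
      using finT assms finite_subset by (blast, blast)
    moreover have "W \<inter> W' = {}" "U \<inter> T = W"
      using W by auto
    ultimately show "U \<in> {U. U \<subseteq> A \<and> card U = c \<and> card (U \<inter> T) = k}"
      using W assms by (auto simp: card_Un_disjoint)
  qed
  have inj: "inj_on ?union ?P"
  proof (rule inj_onI, clarify)
    fix W1 W1' W2 W2'
    assume "W1 \<subseteq> T" "W1' \<subseteq> A - T" "W2 \<subseteq> T" "W2' \<subseteq> A - T" "W1 \<union> W1' = W2 \<union> W2'"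
    then show "W1 = W2 \<and> W1' = W2'"
      by blast
  qed
  have "(card T choose k) * (card (A - T) choose (c - k)) = card (?union ` ?P)"
    using assms finT by (simp add: card_image[OF inj] card_cartesian_product n_subsets)
  also have "\<dots> \<le> card {U. U \<subseteq> A \<and> card U = c \<and> card (U \<inter> T) = k}"
    using assms by (intro card_mono[OF _ sub]) auto
  finally show ?thesis .
qed

text \<open>A lower bound for the probability that the first k entries of a uniformly random
  ordering of a uniformly random c-subset U of A, together with a p-random subset of A - U,
  form T: the three factors bound the probability that |U \<inter> T| = k, that U \<inter> T comes first
  in the ordering, and that the p-random subset is T - U.\<close>
definition sample_weight :: "'a set \<Rightarrow> nat \<Rightarrow> nat \<Rightarrow> real \<Rightarrow> 'a set \<Rightarrow> real" where
  "sample_weight A c k p T =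
     real ((card T choose k) * (card (A - T) choose (c - k))) / real (card A choose c)
     * (real (fact k * fact (c - k)) / real (fact c))
     * (p ^ (card T - k) * (1 - p) ^ (card (A - T) - (c - k)))"

lemma pmf_orderings_ge:
  assumes "finite U" "finite V" "card U = c" "card (U \<inter> B) = k" "card V = c'" "card (V \<inter> B) = k'"
    and "(U \<inter> B) \<union> X \<union> (V \<inter> B) \<union> Y = B"
  shows "real (fact k * fact (c - k)) / real (fact c) * (real (fact k' * fact (c' - k')) / real (fact c'))
    \<le> pmf (pmf_of_set (permutations_of_set U) \<bind> (\<lambda>us. pmf_of_set (permutations_of_set V) \<bind>
          (\<lambda>vs. return_pmf (set (take k us) \<union> X \<union> set (drop (c' - k') vs) \<union> Y)))) B"
proof -
  define GU where "GU = {us \<in> permutations_of_set U. set (take k us) = U \<inter> B}"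
  define GV where "GV = {vs \<in> permutations_of_set V. set (take (c' - k') vs) = V - B}"
  have cardU: "card (U - B) = c - k" and cardV: "card (V - B) = c' - k'"
    using assms by (simp_all add: card_Diff_subset_Int)
  have GU: "fact k * fact (c - k) \<le> card GU"
    using card_permutations_of_set_take_ge[of "U \<inter> B" "U - B"] assms cardU
    by (simp add: GU_def Int_Diff_Un Int_Diff_disjoint)
  have "(V - B) \<union> (V \<inter> B) = V" "(V - B) \<inter> (V \<inter> B) = {}"
    by auto
  then have GV: "fact (c' - k') * fact k' \<le> card GV"
    using card_permutations_of_set_take_ge[of "V - B" "V \<inter> B"] assms cardV
    by (simp add: GV_def)
  have inner: "real (card GV) * 1 / real (card (permutations_of_set V)) \<le>
      pmf (pmf_of_set (permutations_of_set V) \<bind>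
        (\<lambda>vs. return_pmf (set (take k us) \<union> X \<union> set (drop (c' - k') vs) \<union> Y))) B"
    if "us \<in> GU" for us
  proof (rule pmf_bind_pmf_of_set_ge)
    fix vs assume "vs \<in> GV"
    then have "set (drop (c' - k') vs) = V \<inter> B"
      by (auto simp: GV_def permutations_of_set_def set_drop_eq_Diff_set_take)
    then show "1 \<le> pmf (return_pmf (set (take k us) \<union> X \<union> set (drop (c' - k') vs) \<union> Y)) B"
      using that assms by (simp add: GU_def)
  qed (use assms in \<open>auto simp: GV_def\<close>)
  have outer: "real (card GU) * (real (card GV) * 1 / real (card (permutations_of_set V)))
      / real (card (permutations_of_set U)) \<le> pmf (pmf_of_set (permutations_of_set U) \<bind> (\<lambda>us.
        pmf_of_set (permutations_of_set V) \<bind>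
          (\<lambda>vs. return_pmf (set (take k us) \<union> X \<union> set (drop (c' - k') vs) \<union> Y)))) B"
    by (rule pmf_bind_pmf_of_set_ge) (use assms inner in \<open>auto simp: GU_def\<close>)
  have "real (fact k * fact (c - k)) / real (fact c) * (real (fact k' * fact (c' - k')) / real (fact c'))
      \<le> real (card GU) / real (fact c) * (real (card GV) / real (fact c'))"
    using GU GV by (intro mult_mono divide_right_mono)
      (auto simp: mult.commute simp del: of_nat_mult intro!: of_nat_mono)
  also have "\<dots> = real (card GU) * (real (card GV) * 1 / real (card (permutations_of_set V)))
      / real (card (permutations_of_set U))"
    using assms by simp
  finally show ?thesis
    using outer by linarith
qed

lemma sample_weight_le:
  assumes "finite A" "T \<subseteq> A" "k \<le> c" "0 \<le> p" "p \<le> 1"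
  shows "sample_weight A c k p T
    \<le> real (card {U. U \<subseteq> A \<and> card U = c \<and> card (U \<inter> T) = k}) / real (card {U. U \<subseteq> A \<and> card U = c})
      * (real (fact k * fact (c - k)) / real (fact c))
      * (p ^ (card T - k) * (1 - p) ^ (card (A - T) - (c - k)))"
  unfolding sample_weight_def n_subsets[OF assms(1)] using assms card_subsets_Int_ge[OF assms(1-3)]
  by (intro mult_right_mono divide_right_mono) (simp_all flip: of_nat_mult)

lemma pmf_subset_then_random_subset_ge:
  fixes A T :: "'a set" and c k :: nat
  defines "G \<equiv> {U. U \<subseteq> A \<and> card U = c \<and> card (U \<inter> T) = k}" and "S \<equiv> {U. U \<subseteq> A \<and> card U = c}"
  assumes "finite A" "T \<subseteq> A" "0 \<le> p" "p \<le> 1" "0 \<le> d" "\<And>U. U \<in> G \<Longrightarrow> d \<le> pmf (f U (T - U)) x"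
  shows "real (card G) / real (card S) * (p ^ (card T - k) * (1 - p) ^ (card (A - T) - (c - k))) * d
    \<le> pmf (pmf_of_set S \<bind> (\<lambda>U. random_subset (A - U) p \<bind> f U)) x"
proof -
  have "real (card G) * (p ^ (card T - k) * (1 - p) ^ (card (A - T) - (c - k)) * d) / real (card S)
      \<le> pmf (pmf_of_set S \<bind> (\<lambda>U. random_subset (A - U) p \<bind> f U)) x"
  proof (rule pmf_bind_pmf_of_set_bind_ge[where g="\<lambda>U. T - U"])
    show "p ^ (card T - k) * (1 - p) ^ (card (A - T) - (c - k)) \<le> pmf (random_subset (A - U) p) (T - U)"
      if "U \<in> G" for U
      using pmf_random_subset_diff_ge[of A T U c k p] that assms by (auto simp: G_def)
  qed (use assms in \<open>auto simp: G_def S_def\<close>)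
  then show ?thesis
    by (simp add: mult_ac)
qed

lemma pmf_two_samples_ge:
  fixes A1 A2 B :: "'a set"
  assumes fin: "finite A1" "finite A2" and disj: "A1 \<inter> A2 = {}" and B: "B \<subseteq> A1 \<union> A2"
    and k: "k \<le> c" "k' \<le> c'" and p: "0 \<le> p" "p \<le> 1" and q: "0 \<le> q" "q \<le> 1"
  shows "sample_weight A1 c k p (B \<inter> A1) * sample_weight A2 c' k' q (B \<inter> A2)
    \<le> pmf (do {
      U \<leftarrow> pmf_of_set {U. U \<subseteq> A1 \<and> card U = c};
      S1 \<leftarrow> random_subset (A1 - U) p;
      V \<leftarrow> pmf_of_set {V. V \<subseteq> A2 \<and> card V = c'};
      S2 \<leftarrow> random_subset (A2 - V) q;
      us \<leftarrow> pmf_of_set (permutations_of_set U);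
      vs \<leftarrow> pmf_of_set (permutations_of_set V);
      return_pmf (set (take k us) \<union> S1 \<union> set (drop (c' - k') vs) \<union> S2)
    }) B"
proof -
  define T1 T2 where "T1 = B \<inter> A1" and "T2 = B \<inter> A2"
  define x1 where "x1 = real (card {U. U \<subseteq> A1 \<and> card U = c \<and> card (U \<inter> T1) = k})
    / real (card {U. U \<subseteq> A1 \<and> card U = c}) * (p ^ (card T1 - k) * (1 - p) ^ (card (A1 - T1) - (c - k)))"
  define x2 where "x2 = real (card {V. V \<subseteq> A2 \<and> card V = c' \<and> card (V \<inter> T2) = k'})
    / real (card {V. V \<subseteq> A2 \<and> card V = c'}) * (q ^ (card T2 - k') * (1 - q) ^ (card (A2 - T2) - (c' - k')))"
  define d1 d2 where "d1 = real (fact k * fact (c - k)) / real (fact c)"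
    and "d2 = real (fact k' * fact (c' - k')) / real (fact c')"
  define R :: "'a set \<Rightarrow> 'a set \<Rightarrow> 'a set \<Rightarrow> 'a set \<Rightarrow> 'a set pmf"
    where "R U S1 V S2 = pmf_of_set (permutations_of_set U) \<bind> (\<lambda>us.
    pmf_of_set (permutations_of_set V) \<bind> (\<lambda>vs.
      return_pmf (set (take k us) \<union> S1 \<union> set (drop (c' - k') vs) \<union> S2)))" for U S1 V S2
  have T: "T1 \<subseteq> A1" "T2 \<subseteq> A2" "B = T1 \<union> T2"
    using B by (auto simp: T1_def T2_def)
  have "0 \<le> x1" "0 \<le> x2" "0 \<le> d1" "0 \<le> d1 * d2"
    using p q by (simp_all add: x1_def x2_def d1_def d2_def)
  have orderings: "d1 * d2 \<le> pmf (R U (T1 - U) V (T2 - V)) B"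
    if "U \<subseteq> A1" "card U = c" "card (U \<inter> T1) = k" "V \<subseteq> A2" "card V = c'" "card (V \<inter> T2) = k'" for U V
    unfolding R_def d1_def d2_def
  proof (rule pmf_orderings_ge)
    have "U \<inter> B = U \<inter> T1" "V \<inter> B = V \<inter> T2"
      using that disj T by auto
    with that show "finite U" "finite V" "U \<inter> B \<union> (T1 - U) \<union> V \<inter> B \<union> (T2 - V) = B"
      "card (U \<inter> B) = k" "card (V \<inter> B) = k'"
      using fin T by (auto intro: finite_subset)
  qed (use that in simp_all)
  have "x1 * (x2 * (d1 * d2)) \<le> pmf (pmf_of_set {U. U \<subseteq> A1 \<and> card U = c} \<bind> (\<lambda>U.
      random_subset (A1 - U) p \<bind> (\<lambda>S1. pmf_of_set {V. V \<subseteq> A2 \<and> card V = c'} \<bind> (\<lambda>V.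
        random_subset (A2 - V) q \<bind> R U S1 V)))) B"
    unfolding x1_def x2_def using fin T p q \<open>0 \<le> x2\<close> \<open>0 \<le> d1 * d2\<close> orderings
    by (intro pmf_subset_then_random_subset_ge) (auto simp: x2_def)
  moreover have "sample_weight A1 c k p T1 \<le> x1 * d1" "sample_weight A2 c' k' q T2 \<le> x2 * d2"
    using sample_weight_le[of A1 T1 k c p] sample_weight_le[of A2 T2 k' c' q] fin T k p q
    by (simp_all add: x1_def x2_def d1_def d2_def mult_ac)
  then have "sample_weight A1 c k p T1 * sample_weight A2 c' k' q T2 \<le> (x1 * d1) * (x2 * d2)"
    using q \<open>0 \<le> x1\<close> \<open>0 \<le> d1\<close> by (intro mult_mono) (auto simp: sample_weight_def)
  ultimately show ?thesis
    unfolding T1_def[symmetric] T2_def[symmetric] R_def by (simp add: mult_ac)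
qed

section \<open>Binomial estimates\<close>

lemma exp_le_one_minus_pow:
  fixes x :: real assumes "0 \<le> x" "x \<le> 1/2"
  shows "exp (- (2 * c * x)) \<le> (1 - x) ^ c"
proof -
  have "x * (2 * x) \<le> x * 1"
    using assms by (intro mult_left_mono) auto
  then have "- 2 * x \<le> - x - 2 * x\<^sup>2"
    by (simp add: power2_eq_square)
  also have "\<dots> \<le> ln (1 - x)"
    using assms by (rule ln_one_minus_pos_lower_bound)
  finally have "exp (real c * (- 2 * x)) \<le> exp (real c * ln (1 - x))"
    by (intro exp_mono mult_left_mono) auto
  also have "\<dots> = (1 - x) ^ c"
    using assms by (simp add: exp_of_nat_mult)
  finally show ?thesis
    by (simp add: mult_ac)
qed

lemma half_plus_pow_le_exp:
  fixes a :: real assumes "0 \<le> a"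
  shows "(1/2 + a) ^ c \<le> exp (2 * real c * a) / 2 ^ c"
proof -
  have "(1/2 + a) ^ c = (1 + 2 * a) ^ c / 2 ^ c"
    by (simp add: add_divide_distrib flip: power_divide)
  also have "\<dots> \<le> exp (2 * a) ^ c / 2 ^ c"
    using assms by (intro divide_right_mono power_mono) (auto simp: exp_ge_add_one_self)
  also have "\<dots> = exp (2 * real c * a) / 2 ^ c"
    by (simp add: mult_ac flip: exp_of_nat_mult)
  finally show ?thesis .
qed

lemma fact_mult_pow_le_fact: "fact a * (a + 1) ^ k \<le> (fact (a + k) :: nat)"
proof (induction k)
  case (Suc k)
  have "fact a * (a + 1) ^ Suc k = (a + 1) * (fact a * (a + 1) ^ k)"
    by (simp add: algebra_simps)
  also have "\<dots> \<le> (a + k + 1) * fact (a + k)"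
    using Suc by (intro mult_mono) auto
  finally show ?case
    by (simp add: algebra_simps)
qed simp

lemma pow_le_choose_mult_fact:
  assumes "k \<le> b"
  shows "(b - k + 1) ^ k \<le> (b choose k) * fact k"
proof -
  have "fact (b - k) * (b - k + 1) ^ k \<le> fact (b - k) * ((b choose k) * fact k)"
    using fact_mult_pow_le_fact[of "b - k" k] binomial_fact_lemma[OF assms] assms
    by (simp add: algebra_simps)
  then show ?thesis
    by simp
qed

text \<open>Every factor of the falling factorials is at least y, while (m choose c) c! \<le> m^c.\<close>
lemma pow_le_choose_ratio:
  fixes y :: real
  assumes "k \<le> b" "c - k \<le> m - b" "k \<le> c" "b \<le> m" "0 \<le> y"
    and "y \<le> real (b - k + 1)" "y \<le> real (m - b - (c - k) + 1)"
  shows "(y / real m) ^ c \<le> real ((b choose k) * ((m - b) choose (c - k))) / real (m choose c)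
    * (real (fact k * fact (c - k)) / real (fact c))"
proof -
  have "c \<le> m"
    using assms by linarith
  have "y ^ k \<le> real (b - k + 1) ^ k"
    using assms by (intro power_mono) auto
  also have "\<dots> \<le> real ((b choose k) * fact k)"
    unfolding of_nat_power[symmetric] of_nat_le_iff using assms(1) by (rule pow_le_choose_mult_fact)
  finally have first: "y ^ k \<le> real ((b choose k) * fact k)" .
  have "y ^ (c - k) \<le> real (m - b - (c - k) + 1) ^ (c - k)"
    using assms by (intro power_mono) auto
  also have "\<dots> \<le> real (((m - b) choose (c - k)) * fact (c - k))"
    unfolding of_nat_power[symmetric] of_nat_le_iff using assms(2) by (rule pow_le_choose_mult_fact)
  finally have second: "y ^ (c - k) \<le> real (((m - b) choose (c - k)) * fact (c - k))" .
  have total: "real ((m choose c) * fact c) \<le> real m ^ c"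
    unfolding of_nat_power[symmetric] of_nat_le_iff by (rule binomial_fact_pow)
  have "(y / real m) ^ c = y ^ k * y ^ (c - k) / real m ^ c"
    using assms by (simp add: power_divide flip: power_add)
  also have "\<dots> \<le> real ((b choose k) * fact k) * real (((m - b) choose (c - k)) * fact (c - k))
        / real ((m choose c) * fact c)"
    using first second total \<open>c \<le> m\<close> assms by (intro frac_le mult_mono) auto
  also have "\<dots> = real ((b choose k) * ((m - b) choose (c - k))) / real (m choose c)
      * (real (fact k * fact (c - k)) / real (fact c))"
    by (simp add: divide_inverse mult_ac)
  finally show ?thesis .
qed

lemma bernoulli_pow_le_shift:
  fixes p e :: real
  assumes "p = 1/2 + e" "\<bar>e\<bar> \<le> 1/2" "k \<le> c" "k \<le> b" "c - k \<le> m - b"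
  shows "p ^ b * (1 - p) ^ (m - b) \<le> (1/2 + \<bar>e\<bar>) ^ c * (p ^ (b - k) * (1 - p) ^ (m - b - (c - k)))"
proof -
  have "p ^ k * (1 - p) ^ (c - k) \<le> (1/2 + \<bar>e\<bar>) ^ k * (1/2 + \<bar>e\<bar>) ^ (c - k)"
    using assms by (intro mult_mono power_mono) auto
  also have "\<dots> = (1/2 + \<bar>e\<bar>) ^ c"
    using assms by (simp flip: power_add)
  finally have "p ^ k * (1 - p) ^ (c - k) * (p ^ (b - k) * (1 - p) ^ (m - b - (c - k)))
      \<le> (1/2 + \<bar>e\<bar>) ^ c * (p ^ (b - k) * (1 - p) ^ (m - b - (c - k)))"
    using assms by (intro mult_right_mono) auto
  moreover have "k + (b - k) = b" "c - k + (m - b - (c - k)) = m - b"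
    using assms by simp_all
  then have "p ^ k * p ^ (b - k) = p ^ b" "(1 - p) ^ (c - k) * (1 - p) ^ (m - b - (c - k)) = (1 - p) ^ (m - b)"
    by (metis power_add)+
  then have "p ^ k * (1 - p) ^ (c - k) * (p ^ (b - k) * (1 - p) ^ (m - b - (c - k)))
      = p ^ b * (1 - p) ^ (m - b)"
    by (metis mult.assoc mult.left_commute)
  ultimately show ?thesis
    by simp
qed

lemma sample_weight_ge:
  fixes A T :: "'a set" and p e D :: real
  defines "m \<equiv> card A"
  assumes A: "finite A" "T \<subseteq> A" "m > 0" and k: "k \<le> c" and D: "0 \<le> D" "D \<le> m / 4"
    and T: "m / 2 - D \<le> real (card T) - real k" "m / 2 - D \<le> real (card (A - T)) - (real c - real k)"
    and p: "p = 1/2 + e" "\<bar>e\<bar> \<le> 1/4"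
  shows "exp (- (4 * c * D / m) - 2 * c * \<bar>e\<bar>) * (p ^ card T * (1 - p) ^ card (A - T))
    \<le> sample_weight A c k p T"
proof -
  define b y x where "b = card T" and "y = m / 2 - D" and "x = 2 * D / m"
  define R where "R = p ^ (b - k) * (1 - p) ^ (m - b - (c - k))"
  have AT: "card (A - T) = m - b" "b \<le> m"
    using A finite_subset[OF A(2)] by (simp_all add: b_def m_def card_Diff_subset card_mono)
  have "0 < y"
    using A D by (simp add: y_def)
  then have bk: "k \<le> b" "c - k \<le> m - b"
    using T AT k by (simp_all add: b_def y_def)
  have x: "0 \<le> x" "x \<le> 1/2" "y / m = (1 - x) / 2"
    using A D by (simp_all add: x_def y_def field_simps)
  have "exp (- (4 * c * D / m)) \<le> (1 - x) ^ c"
    using exp_le_one_minus_pow[OF x(1,2), of c] by (simp add: x_def mult_ac)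
  then have "exp (- (4 * c * D / m)) / 2 ^ c \<le> (1 - x) ^ c / 2 ^ c"
    by (rule divide_right_mono) simp
  also have "\<dots> = (y / m) ^ c"
    by (simp add: x(3) power_divide)
  also have "\<dots> \<le> real ((b choose k) * ((m - b) choose (c - k))) / real (m choose c)
      * (real (fact k * fact (c - k)) / real (fact c))"
    using bk AT k \<open>0 < y\<close> T by (intro pow_le_choose_ratio) (auto simp: b_def y_def of_nat_diff)
  finally have binomial_part: "exp (- (4 * c * D / m)) / 2 ^ c \<le> \<dots>" .
  have "0 \<le> R"
    using p by (simp add: R_def)
  have "exp (- (4 * c * D / m) - 2 * c * \<bar>e\<bar>) * (p ^ b * (1 - p) ^ (m - b))
      \<le> exp (- (4 * c * D / m) - 2 * c * \<bar>e\<bar>) * ((1/2 + \<bar>e\<bar>) ^ c * R)"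
    using bernoulli_pow_le_shift[of p e k c b m] p bk k by (simp add: R_def)
  also have "\<dots> \<le> exp (- (4 * c * D / m) - 2 * c * \<bar>e\<bar>) * (exp (2 * real c * \<bar>e\<bar>) / 2 ^ c * R)"
    using half_plus_pow_le_exp[of "\<bar>e\<bar>" c] \<open>0 \<le> R\<close> by (intro mult_left_mono mult_right_mono) auto
  also have "\<dots> = exp (- (4 * c * D / m)) / 2 ^ c * R"
    by (simp add: exp_diff)
  also have "\<dots> \<le> real ((b choose k) * ((m - b) choose (c - k))) / real (m choose c)
      * (real (fact k * fact (c - k)) / real (fact c)) * R"
    using binomial_part \<open>0 \<le> R\<close> by (rule mult_right_mono)
  also have "\<dots> = sample_weight A c k p T"
    by (simp add: sample_weight_def R_def AT b_def m_def)
  finally show ?thesis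
    using AT by (simp add: b_def)
qed

lemma ln_half_plus_minus_ln_half_minus_le:
  fixes e :: real assumes "\<bar>e\<bar> \<le> 1/4"
  shows "ln (1/2 + e) - ln (1/2 - e) \<le> 8 * \<bar>e\<bar>"
proof -
  have "ln (1/2 + e) - ln (1/2 - e) = ln ((1/2 + e) / (1/2 - e))"
    using assms by (subst ln_div) auto
  also have "\<dots> \<le> (1/2 + e) / (1/2 - e) - 1"
    using assms by (intro ln_le_minus_one) auto
  also have "\<dots> = 2 * e / (1/2 - e)"
    using assms by (simp add: field_simps)
  also have "\<dots> \<le> 2 * \<bar>e\<bar> / (1/4)"
    using assms by (intro frac_le) auto
  finally show ?thesis
    by simp
qed

lemma abs_ln_minus_ln_one_minus_le:
  fixes e :: real assumes "\<bar>e\<bar> \<le> 1/4"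
  shows "\<bar>ln (1/2 + e) - ln (1 - (1/2 + e))\<bar> \<le> 8 * \<bar>e\<bar>"
  using ln_half_plus_minus_ln_half_minus_le[of e] ln_half_plus_minus_ln_half_minus_le[of "- e"] assms
  by (simp add: abs_le_iff)

lemma bernoulli_pow_le_exp_mult:
  fixes p :: real assumes "0 < p" "p < 1" "b \<le> m" "b' \<le> m"
  shows "p ^ b * (1 - p) ^ (m - b)
    \<le> p ^ b' * (1 - p) ^ (m - b') * exp (\<bar>real b - real b'\<bar> * \<bar>ln p - ln (1 - p)\<bar>)"
proof -
  define E where "E a = real a * ln p + (real m - real a) * ln (1 - p)" for a :: nat
  have eq: "p ^ a * (1 - p) ^ (m - a) = exp (E a)" if "a \<le> m" for a
  proof -
    have "p ^ a = exp (real a * ln p)" "(1 - p) ^ (m - a) = exp (real (m - a) * ln (1 - p))"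
      using assms by (simp_all add: exp_of_nat_mult)
    then show ?thesis
      using that by (simp add: E_def exp_add of_nat_diff)
  qed
  have "E b = E b' + (real b - real b') * (ln p - ln (1 - p))"
    by (simp add: E_def algebra_simps)
  also have "\<dots> \<le> E b' + \<bar>real b - real b'\<bar> * \<bar>ln p - ln (1 - p)\<bar>"
    by (metis abs_ge_self abs_mult add_left_mono)
  finally have "exp (E b) \<le> exp (E b') * exp (\<bar>real b - real b'\<bar> * \<bar>ln p - ln (1 - p)\<bar>)"
    by (simp flip: exp_add)
  then show ?thesis
    using assms by (simp add: eq)
qed

lemma card_subsets_card_in:
  assumes "finite A"
  shows "card {D. D \<subseteq> A \<and> card D \<in> W} = (\<Sum>b\<in>W \<inter> {..card A}. card A choose b)"
proof -
  have "{D. D \<subseteq> A \<and> card D \<in> W} = (\<Union>b\<in>W \<inter> {..card A}. {D. D \<subseteq> A \<and> card D = b})"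
    using assms by (auto intro: card_mono)
  also have "card \<dots> = (\<Sum>b\<in>W \<inter> {..card A}. card {D. D \<subseteq> A \<and> card D = b})"
    using assms by (intro card_UN_disjoint) auto
  finally show ?thesis
    using assms by (simp add: n_subsets)
qed

lemma sum_binomial_window_ge:
  fixes p L :: real assumes "m > 0" "0 \<le> p" "p \<le> 1" "0 \<le> L"
  shows "1 - 2 * exp (-2 * L\<^sup>2 / m)
    \<le> (\<Sum>b\<in>{b. b \<le> m \<and> \<bar>real b - m * p\<bar> \<le> L}. real (m choose b) * p ^ b * (1 - p) ^ (m - b))"
proof -
  interpret binomial_distribution m p
    using assms by unfold_locales auto
  let ?P = "measure_pmf.prob (binomial_pmf m p)"
  define W where "W = {b. b \<le> m \<and> \<bar>real b - m * p\<bar> \<le> L}"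
  have "UNIV = W \<union> {x. \<bar>real x - m * p\<bar> \<ge> L} \<union> {x. m < x}"
    by (auto simp: W_def)
  then have "1 = ?P (W \<union> {x. \<bar>real x - m * p\<bar> \<ge> L} \<union> {x. m < x})"
    by simp
  also have "\<dots> \<le> ?P W + ?P {x. \<bar>real x - m * p\<bar> \<ge> L} + ?P {x. m < x}"
    using measure_Un_le[of "W \<union> {x. \<bar>real x - m * p\<bar> \<ge> L}" "measure_pmf (binomial_pmf m p)" "{x. m < x}"]
      measure_Un_le[of W "measure_pmf (binomial_pmf m p)" "{x. \<bar>real x - m * p\<bar> \<ge> L}"]
    by simp
  finally have "1 \<le> ?P W + ?P {x. \<bar>real x - m * p\<bar> \<ge> L} + ?P {x. m < x}" .
  moreover have "?P {x. m < x} = 0"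
    unfolding measure_pmf_zero_iff using assms by (auto simp: set_pmf_binomial_eq split: if_splits)
  moreover have "?P {x. \<bar>real x - m * p\<bar> \<ge> L} \<le> 2 * exp (-2 * L\<^sup>2 / m)"
    using prob_abs_ge[OF assms(1,4)] .
  ultimately have "1 - 2 * exp (-2 * L\<^sup>2 / m) \<le> ?P W"
    by linarith
  also have "\<dots> = (\<Sum>b\<in>W. real (m choose b) * p ^ b * (1 - p) ^ (m - b))"
    using assms by (simp add: measure_measure_pmf_finite W_def)
  finally show ?thesis
    unfolding W_def .
qed

text \<open>The window around the mean carries binomial mass at least 1/2 by Hoeffding, and all
  of its point masses are within a factor exp(16 L |e|) of the one at b0.\<close>
lemma card_window_mult_bernoulli_pow_ge:
  fixes A :: "'a set" and e L :: real
  defines "m \<equiv> card A" and "p \<equiv> 1/2 + e"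
  assumes "finite A" "m > 0" "\<bar>e\<bar> \<le> 1/4" "0 \<le> L" "b0 \<le> m" "\<bar>real b0 - m * p\<bar> \<le> L"
    and "exp (-2 * L\<^sup>2 / m) \<le> 1/4"
  shows "1 / (2 * exp (16 * L * \<bar>e\<bar>))
    \<le> real (card {D. D \<subseteq> A \<and> \<bar>real (card D) - m * p\<bar> \<le> L}) * (p ^ b0 * (1 - p) ^ (m - b0))"
proof -
  define W where "W = {b. b \<le> m \<and> \<bar>real b - m * p\<bar> \<le> L}"
  define \<mu> where "\<mu> = p ^ b0 * (1 - p) ^ (m - b0)"
  have p: "0 < p" "p < 1"
    using assms by (auto simp: p_def)
  have card_eq: "card {D. D \<subseteq> A \<and> \<bar>real (card D) - m * p\<bar> \<le> L} = (\<Sum>b\<in>W. m choose b)"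
    using card_subsets_card_in[of A "{b. \<bar>real b - m * p\<bar> \<le> L}"] assms
    by (simp add: W_def m_def Collect_conj_eq Int_commute atMost_def)
  have "1/2 \<le> (\<Sum>b\<in>W. real (m choose b) * (\<mu> * exp (16 * L * \<bar>e\<bar>)))"
  proof -
    have "1/2 \<le> (\<Sum>b\<in>W. real (m choose b) * p ^ b * (1 - p) ^ (m - b))"
      using sum_binomial_window_ge[of m p L] assms p by (simp add: W_def)
    also have "\<dots> \<le> (\<Sum>b\<in>W. real (m choose b) * (\<mu> * exp (16 * L * \<bar>e\<bar>)))"
    proof (intro sum_mono)
      fix b assume "b \<in> W"
      then have "\<bar>real b - real b0\<bar> * \<bar>ln p - ln (1 - p)\<bar> \<le> (2 * L) * (8 * \<bar>e\<bar>)"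
        using assms abs_ln_minus_ln_one_minus_le[of e]
        by (intro mult_mono) (auto simp: W_def p_def abs_le_iff)
      then have "exp (\<bar>real b - real b0\<bar> * \<bar>ln p - ln (1 - p)\<bar>) \<le> exp (16 * L * \<bar>e\<bar>)"
        by simp
      moreover have "p ^ b * (1 - p) ^ (m - b)
          \<le> \<mu> * exp (\<bar>real b - real b0\<bar> * \<bar>ln p - ln (1 - p)\<bar>)"
        using bernoulli_pow_le_exp_mult[of p b m b0] \<open>b \<in> W\<close> assms p by (simp add: W_def \<mu>_def)
      moreover have "0 \<le> \<mu>"
        using p by (simp add: \<mu>_def)
      ultimately have "p ^ b * (1 - p) ^ (m - b) \<le> \<mu> * exp (16 * L * \<bar>e\<bar>)"
        by (meson mult_left_mono order_trans)
      then show "real (m choose b) * p ^ b * (1 - p) ^ (m - b) \<le> real (m choose b) * (\<mu> * exp (16 * L * \<bar>e\<bar>))"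
        by (simp add: mult.assoc mult_left_mono)
    qed
    finally show ?thesis .
  qed
  also have "\<dots> = real (\<Sum>b\<in>W. m choose b) * \<mu> * exp (16 * L * \<bar>e\<bar>)"
    by (simp add: sum_distrib_right mult.assoc)
  finally have "1/2 \<le> real (card {D. D \<subseteq> A \<and> \<bar>real (card D) - m * p\<bar> \<le> L}) * \<mu>
      * exp (16 * L * \<bar>e\<bar>)"
    by (simp only: card_eq)
  then show ?thesis
    by (simp add: \<mu>_def field_simps)
qed

lemma sample_weight_ge_window:
  fixes A T :: "'a set" and e L :: real
  defines "m \<equiv> card A" and "p \<equiv> 1/2 + e"
  assumes A: "finite A" "T \<subseteq> A" "m > 0" and k: "k \<le> c" and e: "\<bar>e\<bar> \<le> 1/4" and L: "0 \<le> L"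
    and T: "\<bar>real (card T) - m * p\<bar> \<le> L"
    and small: "m * \<bar>e\<bar> + L + c \<le> m / 4" "exp (-2 * L\<^sup>2 / m) \<le> 1/4"
  shows "exp (- (4 * real c * (m * \<bar>e\<bar> + L + c) / m + 2 * real c * \<bar>e\<bar> + 16 * L * \<bar>e\<bar>))
      / (2 * real (card {D. D \<subseteq> A \<and> \<bar>real (card D) - m * p\<bar> \<le> L}))
    \<le> sample_weight A c k p T"
proof -
  define D where "D = m * \<bar>e\<bar> + L + c"
  define N where "N = real (card {D. D \<subseteq> A \<and> \<bar>real (card D) - m * p\<bar> \<le> L})"
  define \<mu> where "\<mu> = p ^ card T * (1 - p) ^ card (A - T)"
  have card: "card T \<le> m" "card (A - T) = m - card T"
    using A finite_subset[OF A(2)] by (simp_all add: m_def card_mono card_Diff_subset)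
  have "\<bar>m * e\<bar> \<le> m * \<bar>e\<bar>"
    by (simp add: abs_mult)
  then have bounds: "m / 2 - D \<le> real (card T) - real k"
      "m / 2 - D \<le> real (card (A - T)) - (real c - real k)"
    using T k card by (auto simp: D_def p_def algebra_simps abs_le_iff of_nat_diff)
  have weight: "exp (- (4 * real c * D / m) - 2 * real c * \<bar>e\<bar>) * \<mu> \<le> sample_weight A c k p T"
    unfolding \<mu>_def m_def
    by (rule sample_weight_ge) (use A k e small L bounds in \<open>simp_all add: D_def m_def p_def\<close>)
  have window: "1 / (2 * exp (16 * L * \<bar>e\<bar>)) \<le> N * \<mu>"
    using card_window_mult_bernoulli_pow_ge[of A e L "card T"] A e L T card small
    by (simp add: N_def \<mu>_def m_def p_def card(2))
  moreover have "0 < 1 / (2 * exp (16 * L * \<bar>e\<bar>))"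
    by simp
  ultimately have "0 < N"
    by (cases "N = 0") (auto simp: N_def)
  have "exp (- (4 * real c * D / m + 2 * real c * \<bar>e\<bar> + 16 * L * \<bar>e\<bar>)) / (2 * N)
      = exp (- (4 * real c * D / m) - 2 * real c * \<bar>e\<bar>) * (1 / (2 * exp (16 * L * \<bar>e\<bar>)) / N)"
    by (simp add: exp_diff exp_minus exp_add)
  also have "\<dots> \<le> exp (- (4 * real c * D / m) - 2 * real c * \<bar>e\<bar>) * \<mu>"
    using window \<open>0 < N\<close> by (intro mult_left_mono) (simp_all add: divide_le_eq mult_ac)
  finally show ?thesis
    using weight by (simp add: D_def N_def)
qed

section \<open>The parameters of the theorem\<close>

lemma sqrt_ln_bounds:
  assumes "n \<ge> 10^4"
  shows "1 \<le> sqrt (ln (real n))" "12 * sqrt (ln (real n)) + 13 \<le> sqrt (real n)"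
proof -
  have n: "10000 \<le> real n"
    using assms of_nat_le_iff[of "10^4" n] by simp
  then have "exp 1 \<le> real n"
    using exp_le by linarith
  then show "1 \<le> sqrt (ln (real n))"
    using n by (simp add: ln_ge_iff)
  define u where "u = sqrt (sqrt (real n))"
  define w where "w = sqrt u"
  have uw: "0 < u" "u = w\<^sup>2" "0 < w"
    using n by (simp_all add: u_def w_def)
  have u2: "u\<^sup>2 = sqrt (real n)"
    by (simp add: u_def)
  have sqrt_n: "sqrt (real n) = w ^ 4"
    unfolding u2[symmetric] uw(2) by (simp add: power4_eq_xxxx power2_eq_square)
  have "real n = (sqrt (real n))\<^sup>2"
    by simp
  also have "\<dots> = u ^ 4"
    unfolding u2[symmetric] by (simp add: power4_eq_xxxx power2_eq_square)
  finally have n_u: "real n = u ^ 4" .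
  have "ln (real n) = 4 * ln u"
    using uw by (simp add: n_u ln_realpow)
  also have "\<dots> \<le> 4 * w\<^sup>2"
    using uw ln_le_minus_one[of u] by simp
  also have "\<dots> = (2 * w)\<^sup>2"
    by (simp add: power_mult_distrib)
  finally have sqrt_ln: "sqrt (ln (real n)) \<le> 2 * w"
    using uw by (intro real_le_lsqrt) auto
  have "31/10 \<le> w"
  proof (rule ccontr)
    assume "\<not> 31/10 \<le> w"
    then have "w ^ 8 < (31/10) ^ 8"
      using uw by (intro power_strict_mono) auto
    moreover have "w ^ 8 = real n"
      using uw by (simp add: n_u flip: power_mult)
    moreover have "(31/10 :: real) ^ 8 < 10000"
      by (simp add: power_divide)
    ultimately show False
      using n by linarith
  qed
  then have "w * (31/10) ^ 3 \<le> w * w ^ 3"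
    using uw by (intro mult_left_mono power_mono) auto
  moreover have "(31/10 :: real) ^ 3 = 29791/1000" "w * w ^ 3 = w ^ 4"
    by (simp_all add: power_divide power3_eq_cube power4_eq_xxxx)
  ultimately have "w * (29791/1000) \<le> w ^ 4"
    by simp
  then show "12 * sqrt (ln (real n)) + 13 \<le> sqrt (real n)"
    unfolding sqrt_n using sqrt_ln \<open>31/10 \<le> w\<close> by linarith
qed

text \<open>Each half contributes at most half of the exponent 120 sqrt (log n) of alpha n.\<close>
lemma box_half_exponent_le:
  fixes L s r a c m e :: real
  assumes L: "0 < L" and s: "1 \<le> s" and a: "0 \<le> a" "a \<le> s / 2" and r: "1 \<le> r" "r \<le> 2"
    and c: "0 \<le> c" "c \<le> r * L / 12" and m: "m = r * L\<^sup>2 / 3" and e: "\<bar>e\<bar> = 6 * a / (r * L)"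
  shows "4 * c * (m * \<bar>e\<bar> + L + c) / m + 2 * c * \<bar>e\<bar> + 16 * L * \<bar>e\<bar> \<le> 60 * s"
proof -
  have "0 < m"
    using L r by (simp add: m)
  have me: "m * \<bar>e\<bar> = 2 * a * L"
    using L r by (simp add: m e power2_eq_square field_simps)
  have "4 * c * (m * \<bar>e\<bar> + L + c) \<le> 4 * (r * L / 12) * (2 * a * L + L + r * L / 12)"
    unfolding me using L r a c by (intro mult_mono add_mono) auto
  also have "\<dots> = m * (2 * a + 1 + r / 12)"
    by (simp add: m power2_eq_square field_simps)
  finally have first: "4 * c * (m * \<bar>e\<bar> + L + c) / m \<le> 2 * a + 1 + r / 12"
    using \<open>0 < m\<close> by (simp add: divide_le_eq mult.commute)
  have "2 * c * \<bar>e\<bar> \<le> 2 * (r * L / 12) * \<bar>e\<bar>"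
    using c by (intro mult_right_mono) (auto simp: mult.commute)
  also have "\<dots> = a"
    using L r by (simp add: e field_simps)
  finally have second: "2 * c * \<bar>e\<bar> \<le> a" .
  have "16 * L * \<bar>e\<bar> = 96 * a / r"
    using L r by (simp add: e field_simps)
  also have "\<dots> \<le> 96 * a"
    using a r by (simp add: divide_le_eq mult_left_mono_neg mult_le_cancel_left1)
  finally have third: "16 * L * \<bar>e\<bar> \<le> 96 * a" .
  show ?thesis
    using first second third a r s by linarith
qed

lemma box_half_margins:
  fixes L s r a c m e :: real
  assumes L: "12 * s + 13 \<le> L" and s: "1 \<le> s" and a: "0 \<le> a" "a \<le> s / 2"
    and r: "1 \<le> r" "r \<le> 2" and c: "c \<le> r * L / 12" and m: "m = r * L\<^sup>2 / 3"
    and e: "\<bar>e\<bar> = 6 * a / (r * L)"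
  shows "m * \<bar>e\<bar> + L + c \<le> m / 4" and "exp (-2 * L\<^sup>2 / m) \<le> 1/4"
proof -
  have "0 < L"
    using L s by linarith
  then have "m * \<bar>e\<bar> = 2 * a * L"
    using r by (simp add: m e power2_eq_square field_simps)
  moreover have "2 * a * L \<le> s * L"
    using a \<open>0 < L\<close> by (intro mult_right_mono) auto
  ultimately have "m * \<bar>e\<bar> + L + c \<le> L * (s + 1 + r / 12)"
    using c by (simp add: algebra_simps)
  also have "\<dots> \<le> L * (r * L / 12)"
  proof -
    have "(r - 1) * 13 \<le> (r - 1) * L"
      using r s L by (intro mult_left_mono) auto
    then have "s + 1 + r / 12 \<le> r * L / 12"
      using s r L by (simp add: algebra_simps)
    then show ?thesis
      using \<open>0 < L\<close> by (intro mult_left_mono) auto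
  qed
  also have "\<dots> = m / 4"
    by (simp add: m power2_eq_square)
  finally show "m * \<bar>e\<bar> + L + c \<le> m / 4" .
  have "exp (-2 * L\<^sup>2 / m) \<le> exp (-3)"
    using \<open>0 < L\<close> r by (simp add: m field_simps)
  also have "\<dots> \<le> 1/4"
    using exp_ge_add_one_self[of 3] by (simp add: exp_minus field_simps)
  finally show "exp (-2 * L\<^sup>2 / m) \<le> 1/4" .
qed

lemma abs_bias_le_quarter:
  fixes r :: real
  assumes "n \<ge> 10^4" "\<bar>real_of_int i\<bar> \<le> sqrt (ln (real n)) / 2" "1 \<le> r"
  shows "\<bar>6 * real_of_int i / (r * sqrt (real n))\<bar> \<le> 1/4"
proof -
  have s: "1 \<le> sqrt (ln (real n))" "12 * sqrt (ln (real n)) + 13 \<le> sqrt (real n)"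
    using sqrt_ln_bounds[OF assms(1)] by simp_all
  have "\<bar>6 * real_of_int i / (r * sqrt (real n))\<bar> = 6 * \<bar>real_of_int i\<bar> / (r * sqrt (real n))"
    using assms by (simp add: abs_mult)
  also have "\<dots> \<le> 6 * (sqrt (ln (real n)) / 2) / (1 * sqrt (real n))"
    using assms s by (intro frac_le mult_mono) auto
  also have "\<dots> \<le> 1/4"
    using s by (simp add: divide_le_eq)
  finally show ?thesis .
qed

text \<open>box n i j consists of the unions of a set in half_box n [n/3] (n/6) i with a set in
  half_box n [n/3+1,n] (n/3) j.\<close>
definition half_box :: "nat \<Rightarrow> nat set \<Rightarrow> real \<Rightarrow> int \<Rightarrow> nat set set" where
  "half_box n A ctr i = {D. D \<subseteq> A \<and> \<bar>real (card D) - ctr - 2 * real_of_int i * Lpar n\<bar> \<le> Lpar n}"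

lemma finite_half_box: "finite A \<Longrightarrow> finite (half_box n A ctr i)"
  by (simp add: half_box_def)

lemma Kpar_le: "real (Kpar n) \<le> sqrt (real n) / 12"
proof -
  have "real (Kpar n) = of_int \<lfloor>sqrt (real n) / 12\<rfloor>"
    by (simp add: Kpar_def)
  also have "\<dots> \<le> sqrt (real n) / 12"
    by (rule of_int_floor_le)
  finally show ?thesis .
qed

text \<open>The cases r = 1 and r = 2 are the parts of C_k inside [n/3] and inside [n/3+1,n].\<close>
lemma sample_weight_half_box_ge:
  fixes A T :: "nat set" and i :: int and r :: nat and ctr p :: real
  assumes n: "n \<ge> 10^4" "3 dvd n" and r: "1 \<le> r" "r \<le> 2"
    and i: "\<bar>real_of_int i\<bar> \<le> sqrt (ln (real n)) / 2"
    and A: "finite A" "card A = r * (n div 3)" and k: "k \<le> Kpar n"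
    and ctr: "ctr = real r * real n / 6" and p: "p = 1/2 + 6 * real_of_int i / (real r * sqrt (real n))"
    and T: "T \<in> half_box n A ctr i"
  shows "exp (- 60 * sqrt (ln (real n))) / (2 * real (card (half_box n A ctr i)))
    \<le> sample_weight A (r * Kpar n) (r * k) p T"
proof -
  define L s e where "L = sqrt (real n)" and "s = sqrt (ln (real n))"
    and "e = 6 * real_of_int i / (real r * L)"
  define m where "m = card A"
  have s: "1 \<le> s" "12 * s + 13 \<le> L"
    using sqrt_ln_bounds[OF n(1)] by (simp_all add: s_def L_def)
  have L: "0 < L" "L\<^sup>2 = real n"
    using s n(1) by (simp_all add: L_def)
  have m_real: "real m = real r * L\<^sup>2 / 3"
    using n(2) L A by (simp add: m_def real_of_nat_div)
  have "0 < real r * L\<^sup>2 / 3"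
    using L(1) r by simp
  then have "0 < card A"
    unfolding m_real[symmetric] by (simp add: m_def)
  have K: "real (r * Kpar n) \<le> real r * L / 12"
    using Kpar_le[of n] r by (simp add: L_def mult_left_mono)
  have e: "\<bar>e\<bar> = 6 * \<bar>real_of_int i\<bar> / (real r * L)"
    using L by (simp add: e_def abs_mult)
  have i': "\<bar>real_of_int i\<bar> \<le> s / 2"
    using i by (simp add: s_def)
  have r': "1 \<le> real r" "real r \<le> 2"
    using r by simp_all
  have center: "real m * (1/2 + e) = ctr + 2 * real_of_int i * Lpar n"
    using L r n(1) by (simp add: m_real ctr e_def Lpar_def L_def[symmetric] power2_eq_square field_simps)
  have margins: "real m * \<bar>e\<bar> + L + real (r * Kpar n) \<le> real m / 4" "exp (-2 * L\<^sup>2 / real m) \<le> 1/4"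
    using box_half_margins[OF s(2,1) abs_ge_zero i' r' K m_real e] by simp_all
  define X where "X = 4 * real (r * Kpar n) * (real m * \<bar>e\<bar> + L + real (r * Kpar n)) / real m
    + 2 * real (r * Kpar n) * \<bar>e\<bar> + 16 * L * \<bar>e\<bar>"
  have "X \<le> 60 * s"
    unfolding X_def using box_half_exponent_le[OF L(1) s(1) abs_ge_zero i' r' _ K m_real e] by simp
  then have "exp (- 60 * s) / (2 * real (card (half_box n A ctr i)))
      \<le> exp (- X) / (2 * real (card (half_box n A ctr i)))"
    by (intro divide_right_mono) simp_all
  also have "\<dots> \<le> sample_weight A (r * Kpar n) (r * k) p T"
  proof -
    have "exp (- X) / (2 * real (card {D. D \<subseteq> A \<and> \<bar>real (card D) - real (card A) * (1/2 + e)\<bar> \<le> L}))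
        \<le> sample_weight A (r * Kpar n) (r * k) (1/2 + e) T"
      unfolding X_def m_def
    proof (rule sample_weight_ge_window)
      show "\<bar>real (card T) - real (card A) * (1/2 + e)\<bar> \<le> L"
        using T center by (simp add: half_box_def m_def Lpar_def L_def diff_diff_eq)
    qed (use A k r T margins abs_bias_le_quarter[OF n(1) i, of "real r"] L \<open>0 < card A\<close>
        in \<open>auto simp: m_def e_def L_def half_box_def\<close>)
    moreover have "half_box n A ctr i = {D. D \<subseteq> A \<and> \<bar>real (card D) - real (card A) * (1/2 + e)\<bar> \<le> L}"
      using center by (simp add: half_box_def Lpar_def L_def m_def diff_diff_eq)
    moreover have "p = 1/2 + e"
      by (simp add: p e_def L_def)
    ultimately show ?thesis
      by (simp only:)
  qed
  finally show ?thesis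
    by (simp add: s_def)
qed

lemma finite_box: "finite (box n i j)"
  by (rule finite_subset[of _ "Pow {1..n}"]) (auto simp: box_def)

lemma card_half_boxes_le_card_box:
  "card (half_box n {1..n div 3} (real n / 6) i) * card (half_box n {n div 3 + 1..n} (real n / 3) j)
    \<le> card (box n i j)"
proof -
  let ?F1 = "half_box n {1..n div 3} (real n / 6) i" and ?F2 = "half_box n {n div 3 + 1..n} (real n / 3) j"
  let ?union = "\<lambda>(D1, D2). D1 \<union> D2"
  have halves: "(D1 \<union> D2) \<inter> {1..n div 3} = D1" "(D1 \<union> D2) \<inter> {n div 3 + 1..n} = D2"
    if "D1 \<in> ?F1" "D2 \<in> ?F2" for D1 D2
    using that by (auto simp: half_box_def)
  have "D1 \<union> D2 \<in> box n i j" if "D1 \<in> ?F1" "D2 \<in> ?F2" for D1 D2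
  proof -
    have "rD n (D1 \<union> D2) = real (card D1) - real n / 6" "sD n (D1 \<union> D2) = real (card D2) - real n / 3"
      using halves[OF that] by (simp_all add: rD_def sD_def)
    moreover have "{1..n div 3} \<subseteq> {1..n}" "{n div 3 + 1..n} \<subseteq> {1..n}"
      by auto
    then have "D1 \<union> D2 \<subseteq> {1..n}"
      using that unfolding half_box_def by blast
    ultimately show ?thesis
      using that by (simp add: box_def half_box_def)
  qed
  then have "?union ` (?F1 \<times> ?F2) \<subseteq> box n i j"
    by auto
  moreover have "inj_on ?union (?F1 \<times> ?F2)"
  proof (rule inj_onI, clarify)
    fix D1 D2 D1' D2'
    assume "D1 \<in> ?F1" "D2 \<in> ?F2" "D1' \<in> ?F1" "D2' \<in> ?F2" "D1 \<union> D2 = D1' \<union> D2'"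
    then show "D1 = D1' \<and> D2 = D2'"
      using halves[of D1 D2] halves[of D1' D2'] by simp
  qed
  ultimately have "card (?F1 \<times> ?F2) \<le> card (box n i j)"
    by (metis card_image card_mono finite_box)
  then show ?thesis
    by (simp add: card_cartesian_product)
qed

lemma pmf_C_pmf_ge:
  assumes "n \<ge> 10^4" "\<bar>real_of_int i\<bar> \<le> sqrt (ln (real n)) / 2"
    "\<bar>real_of_int j\<bar> \<le> sqrt (ln (real n)) / 2" "B \<subseteq> {1..n}" "k \<le> Kpar n"
  shows "sample_weight {1..n div 3} (Kpar n) k (p1 n i) (B \<inter> {1..n div 3})
      * sample_weight {n div 3 + 1..n} (2 * Kpar n) (2 * k) (p2 n j) (B \<inter> {n div 3 + 1..n})
    \<le> pmf (C_pmf n i j k) B"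
proof -
  have "6 * real_of_int j / (2 * sqrt (real n)) = 3 * real_of_int j / sqrt (real n)"
    by simp
  then have "0 \<le> p1 n i" "p1 n i \<le> 1" "0 \<le> p2 n j" "p2 n j \<le> 1"
    using abs_bias_le_quarter[OF assms(1,2), of 1] abs_bias_le_quarter[OF assms(1,3), of 2]
    unfolding p1_def p2_def by (simp_all only: mult_1 abs_le_iff) linarith+
  note probs = this
  show ?thesis
    unfolding C_pmf_def by (rule pmf_two_samples_ge) (use probs assms(4,5) in auto)
qed

lemma mult_ge_of_halves:
  fixes w N N1 N2 x y :: real
  assumes "0 \<le> w" "0 < N1" "0 < N2" "N1 * N2 \<le> N" "w / (2 * N1) \<le> x" "w / (2 * N2) \<le> y"
  shows "w\<^sup>2 / (4 * N) \<le> x * y"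
proof -
  have "0 < N1 * N2"
    using assms by simp
  moreover have "0 < N"
    using calculation assms(4) by linarith
  ultimately have "w\<^sup>2 / (4 * N) \<le> w\<^sup>2 / (4 * (N1 * N2))"
    using assms by (intro divide_left_mono) auto
  also have "\<dots> = w / (2 * N1) * (w / (2 * N2))"
    by (simp add: power2_eq_square)
  also have "\<dots> \<le> x * y"
    using assms by (intro mult_mono) (auto intro: order_trans[rotated])
  finally show ?thesis .
qed

lemma mem_half_boxes_if_mem_box:
  assumes "B \<in> box n i j"
  shows "B \<inter> {1..n div 3} \<in> half_box n {1..n div 3} (real n / 6) i"
    and "B \<inter> {n div 3 + 1..n} \<in> half_box n {n div 3 + 1..n} (real n / 3) j"
  using assms by (auto simp: box_def rD_def sD_def half_box_def algebra_simps)

lemma sample_weights_box_ge: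
  assumes "n \<ge> 10^4" "3 dvd n" "\<bar>real_of_int i\<bar> \<le> sqrt (ln (real n)) / 2"
    "\<bar>real_of_int j\<bar> \<le> sqrt (ln (real n)) / 2" "B \<in> box n i j" "k \<le> Kpar n"
  shows "exp (- 60 * sqrt (ln (real n))) / (2 * real (card (half_box n {1..n div 3} (real n / 6) i)))
      \<le> sample_weight {1..n div 3} (Kpar n) k (p1 n i) (B \<inter> {1..n div 3})"
    and "exp (- 60 * sqrt (ln (real n))) / (2 * real (card (half_box n {n div 3 + 1..n} (real n / 3) j)))
      \<le> sample_weight {n div 3 + 1..n} (2 * Kpar n) (2 * k) (p2 n j) (B \<inter> {n div 3 + 1..n})"
proof -
  have "card {n div 3 + 1..n} = 2 * (n div 3)"
    using assms(2) by auto
  have "exp (- 60 * sqrt (ln (real n))) / (2 * real (card (half_box n {1..n div 3} (real n / 6) i)))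
      \<le> sample_weight {1..n div 3} (1 * Kpar n) (1 * k) (p1 n i) (B \<inter> {1..n div 3})"
  proof (rule sample_weight_half_box_ge)
    show "p1 n i = 1/2 + 6 * real_of_int i / (real 1 * sqrt (real n))"
      by (simp add: p1_def)
  qed (use assms mem_half_boxes_if_mem_box(1)[OF assms(5)] in simp_all)
  then show "exp (- 60 * sqrt (ln (real n))) / (2 * real (card (half_box n {1..n div 3} (real n / 6) i)))
      \<le> sample_weight {1..n div 3} (Kpar n) k (p1 n i) (B \<inter> {1..n div 3})"
    by simp
  show "exp (- 60 * sqrt (ln (real n))) / (2 * real (card (half_box n {n div 3 + 1..n} (real n / 3) j)))
      \<le> sample_weight {n div 3 + 1..n} (2 * Kpar n) (2 * k) (p2 n j) (B \<inter> {n div 3 + 1..n})"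
  proof (rule sample_weight_half_box_ge)
    show "p2 n j = 1/2 + 6 * real_of_int j / (real 2 * sqrt (real n))"
      by (simp add: p2_def)
  qed (use assms mem_half_boxes_if_mem_box(2)[OF assms(5)] \<open>card {n div 3 + 1..n} = 2 * (n div 3)\<close>
      in simp_all)
qed

theorem lemma3:
  fixes n k :: nat and i j :: int and B :: "nat set"
  assumes "n \<ge> 10^4" and "3 dvd n"
    and "\<bar>real_of_int i\<bar> \<le> sqrt (ln (real n)) / 2"
    and "\<bar>real_of_int j\<bar> \<le> sqrt (ln (real n)) / 2"
    and "B \<in> box n i j"
    and "k \<le> Kpar n"
  shows "pmf (C_pmf n i j k) B \<ge> 1 / (8 * alpha n * real (card (box n i j)))"
proof -
  define H1 H2 where "H1 = half_box n {1..n div 3} (real n / 6) i"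
    and "H2 = half_box n {n div 3 + 1..n} (real n / 3) j"
  define w where "w = exp (- 60 * sqrt (ln (real n)))"
  have "0 < card H1" "0 < card H2"
    using mem_half_boxes_if_mem_box[OF assms(5)] by (auto simp: H1_def H2_def finite_half_box card_gt_0_iff)
  moreover have "real (card H1) * real (card H2) \<le> real (card (box n i j))"
    using card_half_boxes_le_card_box[of n i j] by (simp add: H1_def H2_def flip: of_nat_mult)
  ultimately have "w\<^sup>2 / (4 * real (card (box n i j)))
      \<le> sample_weight {1..n div 3} (Kpar n) k (p1 n i) (B \<inter> {1..n div 3})
        * sample_weight {n div 3 + 1..n} (2 * Kpar n) (2 * k) (p2 n j) (B \<inter> {n div 3 + 1..n})"
    using sample_weights_box_ge[OF assms] by (intro mult_ge_of_halves) (auto simp: w_def H1_def H2_def)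
  also have "\<dots> \<le> pmf (C_pmf n i j k) B"
    using assms(5) by (intro pmf_C_pmf_ge assms) (auto simp: box_def)
  finally have lower: "w\<^sup>2 / (4 * real (card (box n i j))) \<le> pmf (C_pmf n i j k) B" .
  have "0 < card (box n i j)"
    using assms(5) finite_box card_gt_0_iff by blast
  moreover have "w\<^sup>2 = 1 / alpha n"
    unfolding w_def alpha_def power2_eq_square exp_add[symmetric] by (simp add: exp_minus divide_inverse)
  ultimately have "1 / (8 * alpha n * real (card (box n i j))) \<le> w\<^sup>2 / (4 * real (card (box n i j)))"
    by (simp add: alpha_def field_simps)
  with lower show ?thesis
    by linarith
qed

end
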